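(* Let $A\in\mathbb{R}^{n\times n}$ be a singular positive semi-definite matrix with $\mathrm{rank}(A)=d<n$, and let $u_0\notin\mathrm{range}(A)$. Then for any $\lambda_0>0$, $u_0^\intercal(\lambda_0u_0u_0^\intercal+A)^\dagger u_0=1/\lambda_0$.
   Context: $A^\dagger$ is the Moore–Penrose pseudo-inverse; $\mathrm{range}(A)$ is the column space of $A$. *)

theory Defs
  imports "HOL-Analysis.Analysis"
begin

definition psd_matrix :: "real^'n^'n \<Rightarrow> bool" where
  "psd_matrix A \<longleftrightarrow> transpose A = A \<and> (\<forall>x. 0 \<le> x \<bullet> (A *v x))"

definition outer_prod :: "real^'n \<Rightarrow> real^'m \<Rightarrow> real^'m^'n" where
  "outer_prod u v = (\<chi> i j. u $ i * v $ j)"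

definition pinv :: "real^'n^'m \<Rightarrow> real^'m^'n" where
  "pinv A = (THE X. A ** X ** A = A \<and> X ** A ** X = X \<and>
                    transpose (A ** X) = A ** X \<and> transpose (X ** A) = X ** A)"

end

theory Submission
  imports Defs
begin

text \<open>Write \<open>u\<^sub>0 = y + w\<close> with \<open>y \<in> range A\<close> and \<open>w \<bottom> range A\<close>. Since \<open>A\<close> is
  symmetric, \<open>A w = 0\<close>, and \<open>w \<noteq> 0\<close> because \<open>u\<^sub>0 \<notin> range A\<close>. Hence
  \<open>M = \<lambda>\<^sub>0 u\<^sub>0 u\<^sub>0\<^sup>T + A\<close> maps \<open>z = w / (\<lambda>\<^sub>0 \<parallel>w\<parallel>\<^sup>2)\<close> to \<open>u\<^sub>0\<close>, and for a
  symmetric \<open>M\<close> with \<open>u\<^sub>0 = M z\<close> the Penrose identity \<open>M M\<^sup>\<dagger> M = M\<close> gives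
  \<open>u\<^sub>0\<^sup>T M\<^sup>\<dagger> u\<^sub>0 = z\<^sup>T M M\<^sup>\<dagger> M z = z\<^sup>T u\<^sub>0 = 1/\<lambda>\<^sub>0\<close>.\<close>

lemma symmetric_matrix_inner_commute:
  fixes M :: "real^'n^'n"
  assumes "transpose M = M"
  shows "(M *v x) \<bullet> y = x \<bullet> (M *v y)"
  by (metis assms dot_lmul_matrix inner_commute transpose_matrix_vector)

lemma symmetric_matrix_orthogonal_range_imp_kernel:
  fixes M :: "real^'n^'n"
  assumes "transpose M = M" and "\<And>w. z \<bullet> (M *v w) = 0"
  shows "M *v z = 0"
proof -
  have "(M *v z) \<bullet> (M *v z) = 0"
    using assms symmetric_matrix_inner_commute by metis
  then show ?thesis by simp
qed

lemma symmetric_matrix_inj_on_range: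
  fixes M :: "real^'n^'n"
  assumes "transpose M = M"
  shows "inj_on ((*v) M) (range ((*v) M))"
proof -
  have "x = 0" if "x \<in> range ((*v) M)" "M *v x = 0" for x
  proof -
    from that(1) obtain w where "x = M *v w" by auto
    then have "x \<bullet> x = w \<bullet> (M *v x)"
      using symmetric_matrix_inner_commute[OF assms] by metis
    then show "x = 0" using that(2) by simp
  qed
  then show ?thesis
    by (simp add: linear_inj_on_iff_eq_0 linear_subspace_image)
qed

lemma transpose_add: "transpose (A + B) = transpose A + transpose B"
  by (simp add: transpose_def vec_eq_iff)

lemma transpose_outer_prod: "transpose (outer_prod u v) = outer_prod v u"
  by (simp add: outer_prod_def transpose_def vec_eq_iff mult.commute)

lemma outer_prod_mult_vector: "outer_prod u v *v x = (v \<bullet> x) *\<^sub>R u"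
  by (simp add: outer_prod_def vec_eq_iff matrix_vector_mult_def inner_vec_def
      sum_distrib_left algebra_simps)

lemma orthogonal_projection_matrix_exists:
  fixes S :: "(real^'n) set"
  assumes "subspace S"
  obtains P :: "real^'n^'n" where "transpose P = P" "\<And>x. P *v x \<in> S"
    "\<And>y. y \<in> S \<Longrightarrow> P *v y = y" "\<And>x y. y \<in> S \<Longrightarrow> orthogonal y (x - P *v x)"
proof -
  obtain B where B: "pairwise orthogonal B" "\<And>x. x \<in> B \<Longrightarrow> norm x = 1" "span B = S"
    using orthonormal_basis_subspace[OF assms] by metis
  have unit: "b \<bullet> b = 1" if "b \<in> B" for b
    using B(2)[OF that] by (simp add: dot_square_norm)
  define p where "p x = (\<Sum>b\<in>B. (b \<bullet> x) *\<^sub>R b)" for x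
  have "linear p"
    unfolding p_def
    by (rule linearI) (simp_all add: inner_add_right scaleR_add_left sum.distrib scaleR_sum_right)
  then have Pv: "matrix p *v x = p x" for x
    by simp
  have orth: "orthogonal y (x - p x)" if "y \<in> S" for x y
  proof -
    have "p x = (\<Sum>b\<in>B. (b \<bullet> x / (b \<bullet> b)) *\<^sub>R b)"
      unfolding p_def by (intro sum.cong) (auto simp: unit)
    then show ?thesis
      using Gram_Schmidt_step[OF B(1), of y x] B(3) that by simp
  qed
  have in_S: "p x \<in> S" for x
  proof -
    have "p x \<in> span B"
      unfolding p_def by (intro span_sum span_scale span_base)
    then show ?thesis
      using B(3) by simp
  qed
  have fix_S: "p y = y" if "y \<in> S" for y
  proof -
    have "y - p y \<in> S"
      using that in_S assms by (simp add: subspace_diff)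
    then show ?thesis
      using orth[of "y - p y" y] by (simp add: orthogonal_self)
  qed
  have "transpose (matrix p) *v x = matrix p *v x" for x
  proof -
    have "(transpose (matrix p) *v x) \<bullet> y = p x \<bullet> y" for y
    proof -
      have "(transpose (matrix p) *v x) \<bullet> y = x \<bullet> p y"
        by (simp add: dot_lmul_matrix Pv)
      also have "\<dots> = (\<Sum>b\<in>B. (b \<bullet> x) * (b \<bullet> y))"
        by (simp add: p_def inner_sum_right inner_commute mult.commute)
      also have "\<dots> = p x \<bullet> y"
        by (simp add: p_def inner_sum_left)
      finally show ?thesis .
    qed
    then show ?thesis
      by (metis Pv vector_eq_rdot)
  qed
  then have "transpose (matrix p) = matrix p"
    by (simp add: matrix_eq)
  then show ?thesis
    using that Pv in_S fix_S orth by metis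
qed

definition penrose_conditions :: "real^'n^'m \<Rightarrow> real^'m^'n \<Rightarrow> bool" where
  "penrose_conditions A X \<longleftrightarrow> A ** X ** A = A \<and> X ** A ** X = X \<and>
     transpose (A ** X) = A ** X \<and> transpose (X ** A) = X ** A"

lemma penrose_conditions_unique:
  assumes "penrose_conditions A X" and "penrose_conditions A Y"
  shows "X = Y"
proof -
  from assms have X: "A ** X ** A = A" "X ** A ** X = X"
      "transpose (A ** X) = A ** X" "transpose (X ** A) = X ** A"
    and Y: "A ** Y ** A = A" "Y ** A ** Y = Y"
      "transpose (A ** Y) = A ** Y" "transpose (Y ** A) = Y ** A"
    by (simp_all add: penrose_conditions_def)
  have "X = X ** transpose (A ** X)"
    using X(2,3) by (simp add: matrix_mul_assoc)
  also have "\<dots> = X ** transpose X ** transpose (A ** Y ** A)"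
    using Y(1) by (simp add: matrix_transpose_mul matrix_mul_assoc)
  also have "\<dots> = X ** (transpose (A ** X) ** transpose (A ** Y))"
    by (simp add: matrix_transpose_mul matrix_mul_assoc)
  also have "\<dots> = X ** A ** Y"
    using X(2,3) Y(3) by (simp add: matrix_mul_assoc)
  finally have XAY: "X = X ** A ** Y" .
  have "Y = transpose (Y ** A) ** Y"
    using Y(2,4) by (simp add: matrix_mul_assoc)
  also have "\<dots> = transpose (A ** X ** A) ** transpose Y ** Y"
    using X(1) by (simp add: matrix_transpose_mul)
  also have "\<dots> = (transpose (X ** A) ** transpose (Y ** A)) ** Y"
    by (simp add: matrix_transpose_mul matrix_mul_assoc)
  also have "\<dots> = X ** A ** Y"
    using X(4) Y(2,4) by (metis matrix_mul_assoc)
  finally show ?thesis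
    using XAY by simp
qed

lemma pinv_eqI: "penrose_conditions A X \<Longrightarrow> pinv A = X"
  unfolding pinv_def penrose_conditions_def[symmetric]
  using penrose_conditions_unique by blast

lemma symmetric_matrix_penrose_conditions_pinv:
  fixes M :: "real^'n^'n"
  assumes sym: "transpose M = M"
  shows "penrose_conditions M (pinv M)"
proof -
  let ?R = "range ((*v) M)"
  have R: "subspace ?R"
    by (simp add: linear_subspace_image)
  obtain P where P: "transpose P = P" "\<And>x. P *v x \<in> ?R" "\<And>y. y \<in> ?R \<Longrightarrow> P *v y = y"
      "\<And>x y. y \<in> ?R \<Longrightarrow> orthogonal y (x - P *v x)"
    using orthogonal_projection_matrix_exists[OF R] by blast
  have MP: "M *v (P *v x) = M *v x" for x
  proof -
    have "M *v (x - P *v x) = 0"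
      by (rule symmetric_matrix_orthogonal_range_imp_kernel[OF sym])
        (metis P(4) rangeI orthogonal_def inner_commute)
    then show ?thesis
      by (simp add: matrix_vector_mult_diff_distrib)
  qed
  obtain g where g: "range g \<subseteq> ?R" "linear g" "\<forall>y \<in> ?R. g (M *v y) = y"
    using linear_exists_left_inverse_on[OF _ R symmetric_matrix_inj_on_range[OF sym]] by auto
  have gM: "g (M *v x) = P *v x" for x
    using MP[of x] g(3) P(2) by metis
  have Mg: "M *v g y = y" if "y \<in> ?R" for y
    using that gM MP by auto
  \<comment> \<open>Project onto \<open>range M\<close>, then invert \<open>M\<close> there: both \<open>M X\<close> and \<open>X M\<close> are the projection.\<close>
  define X where "X = matrix g ** P"
  have Xv: "X *v x = g (P *v x)" for x
    unfolding X_def using g(2) by (simp add: matrix_vector_mul_assoc[symmetric])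
  have MX: "M ** X = P"
    unfolding matrix_eq by (simp add: matrix_vector_mul_assoc[symmetric] Xv Mg P(2))
  have XM: "X ** M = P"
    unfolding matrix_eq by (simp add: matrix_vector_mul_assoc[symmetric] Xv P(3) gM)
  have "penrose_conditions M X"
    unfolding penrose_conditions_def MX XM
    by (simp add: matrix_mul_assoc[symmetric] MX P(1))
      (simp add: matrix_eq matrix_vector_mul_assoc[symmetric] Xv P g(1)[unfolded image_subset_iff])
  then show ?thesis
    by (simp add: pinv_eqI)
qed

lemma symmetric_matrix_pinv_quadratic_form:
  fixes M :: "real^'n^'n"
  assumes "transpose M = M"
  shows "(M *v z) \<bullet> (pinv M *v (M *v z)) = z \<bullet> (M *v z)"
proof -
  have "(M *v z) \<bullet> (pinv M *v (M *v z)) = z \<bullet> (M *v (pinv M *v (M *v z)))"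
    by (rule symmetric_matrix_inner_commute[OF assms])
  also have "\<dots> = z \<bullet> (M *v z)"
    using symmetric_matrix_penrose_conditions_pinv[OF assms]
    by (simp add: penrose_conditions_def matrix_vector_mul_assoc matrix_mul_assoc)
  finally show ?thesis .
qed

lemma symmetric_matrix_kernel_vector_not_orthogonal:
  fixes A :: "real^'n^'n"
  assumes sym: "transpose A = A" and u: "u \<notin> range ((*v) A)"
  obtains w where "A *v w = 0" and "u \<bullet> w \<noteq> 0"
proof -
  let ?R = "range ((*v) A)"
  obtain y w where y: "y \<in> span ?R" and w: "\<And>v. v \<in> span ?R \<Longrightarrow> orthogonal w v"
    and u_eq: "u = y + w"
    using orthogonal_subspace_decomp_exists by metis
  have span_R: "span ?R = ?R"
    by (simp add: span_eq_iff linear_subspace_image)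
  have "y \<in> ?R" and w_orth: "\<And>x. w \<bullet> (A *v x) = 0"
    using y w unfolding span_R by (auto simp: orthogonal_def)
  then have "w \<noteq> 0"
    using u u_eq by auto
  moreover have "u \<bullet> w = w \<bullet> w"
    using w[OF y] u_eq by (simp add: inner_add_left orthogonal_def inner_commute[of y])
  moreover have "A *v w = 0"
    using symmetric_matrix_orthogonal_range_imp_kernel[OF sym w_orth] .
  ultimately show ?thesis
    using that by simp
qed

theorem lemma10:
  fixes A :: "real^'n^'n" and u0 :: "real^'n" and d :: nat and lam0 :: real
  assumes "psd_matrix A"
    and "rank A = d" and "d < CARD('n)"
    and "u0 \<notin> range ((*v) A)"
    and "lam0 > 0"
  shows "u0 \<bullet> (pinv (lam0 *\<^sub>R outer_prod u0 u0 + A) *v u0) = 1 / lam0"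
proof -
  define M where "M = lam0 *\<^sub>R outer_prod u0 u0 + A"
  have symA: "transpose A = A"
    using assms(1) by (simp add: psd_matrix_def)
  then have symM: "transpose M = M"
    by (simp add: M_def transpose_add transpose_scalar transpose_outer_prod)
  obtain w where Aw: "A *v w = 0" and uw: "u0 \<bullet> w \<noteq> 0"
    using symmetric_matrix_kernel_vector_not_orthogonal[OF symA assms(4)] .
  define z where "z = (1 / (lam0 * (u0 \<bullet> w))) *\<^sub>R w"
  have Mz: "M *v z = u0"
    using uw assms(5)
    by (simp add: M_def z_def Aw outer_prod_mult_vector algebra_simps scaleR_matrix_vector_assoc[symmetric])
  have "u0 \<bullet> (pinv M *v u0) = z \<bullet> u0"
    using symmetric_matrix_pinv_quadratic_form[OF symM, of z] by (simp add: Mz)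
  also have "\<dots> = 1 / lam0"
    using uw assms(5) by (simp add: z_def inner_commute)
  finally show ?thesis
    unfolding M_def .
qed

end
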